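(* For every positive integer $k$, $$\sum_{j=0}^{2k-1} (-1)^j \sin^2\left(\frac{(2j+1)\pi}{8k+2}\right) = \frac{-\sin^2\left(\frac{2k\pi}{4k+1}\right)}{2\cos\left(\frac{\pi}{4k+1}\right)}$$ and $$\sum_{j=0}^{2k} (-1)^j \sin^2\left(\frac{(2j+1)\pi}{8k+6}\right) = \frac{1}{2} - \frac{\cos^2\left(\frac{(2k+1)\pi}{4k+3}\right)}{2\cos\left(\frac{\pi}{4k+3}\right)}.$$ Consequently $$\lim_{k\to\infty}\sum_{j=0}^{2k-1} (-1)^j \sin^2\left(\frac{(2j+1)\pi}{8k+2}\right) = -\frac12 \quad\text{and}\quad \lim_{k\to\infty}\sum_{j=0}^{2k} (-1)^j \sin^2\left(\frac{(2j+1)\pi}{8k+6}\right) = \frac12.$$ *)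

theory Defs
  imports Complex_Main
begin

end

theory Submission
  imports Defs "HOL-Real_Asymp.Real_Asymp"
begin

text \<open>Writing \<open>sin\<^sup>2 x = (1 - cos (2 x)) / 2\<close> turns the sums into alternating sums of
  \<open>cos ((2j+1) p)\<close>, which telescope after multiplication by \<open>2 cos p\<close>, because
  \<open>2 cos p cos ((2j+1) p) = cos (2j p) + cos (2(j+1) p)\<close>. The identities hold for every \<open>p\<close>;
  for \<open>p = \<pi>/(4k+1)\<close> resp. \<open>p = \<pi>/(4k+3)\<close> we have \<open>cos p > 0\<close>, and as \<open>k \<rightarrow> \<infinity>\<close> the
  closed forms tend to \<open>-1/2\<close> and \<open>1/2\<close> since \<open>p \<rightarrow> 0\<close> while \<open>2kp, (2k+1)p \<rightarrow> \<pi>/2\<close>.\<close>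

lemma cos_times_alternating_sum_cos_odd:
  fixes p :: real
  shows "2 * cos p * (\<Sum>j<N. (-1)^j * cos ((2*real j+1)*p)) = 1 - (-1)^N * cos (2*real N*p)"
proof (induction N)
  case 0
  then show ?case by simp
next
  case (Suc N)
  have product_to_sum: "2 * cos p * cos ((2*real N+1)*p) = cos (2*real N*p) + cos (2*real (Suc N)*p)"
    using cos_times_cos[of "(2*real N+1)*p" p] by (simp add: algebra_simps)
  have "2 * cos p * (\<Sum>j<Suc N. (-1)^j * cos ((2*real j+1)*p))
      = 2 * cos p * (\<Sum>j<N. (-1)^j * cos ((2*real j+1)*p)) + (-1)^N * (2 * cos p * cos ((2*real N+1)*p))"
    by (simp add: algebra_simps)
  also have "\<dots> = 1 - (-1)^Suc N * cos (2*real (Suc N)*p)"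
    unfolding Suc.IH product_to_sum by (simp add: algebra_simps)
  finally show ?case .
qed

lemma sum_neg_one_power: "(\<Sum>j<N. (-1::'a::field_char_0)^j) = (1 - (-1)^N) / 2"
  by (induction N) (auto simp: field_simps)

lemma cos_times_alternating_sum_sin_sq_odd:
  fixes p :: real
  shows "2 * cos p * (\<Sum>j<N. (-1)^j * (sin ((2*real j+1)*p/2))^2)
     = cos p * (1 - (-1)^N) / 2 - (1 - (-1)^N * cos (2*real N*p)) / 2"
proof -
  have "(sin ((2*real j+1)*p/2))^2 = (1 - cos ((2*real j+1)*p)) / 2" for j
    using cos_double_sin[of "(2*real j+1)*p/2"] by simp
  then have sum_eq: "(\<Sum>j<N. (-1)^j * (sin ((2*real j+1)*p/2))^2)
     = (\<Sum>j<N. (-1::real)^j) / 2 - (\<Sum>j<N. (-1)^j * cos ((2*real j+1)*p)) / 2"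
    by (simp add: sum_subtractf sum_divide_distrib right_diff_distrib diff_divide_distrib)
  have "2 * cos p * (\<Sum>j<N. (-1)^j * (sin ((2*real j+1)*p/2))^2)
     = cos p * (\<Sum>j<N. (-1::real)^j) - (2 * cos p * (\<Sum>j<N. (-1)^j * cos ((2*real j+1)*p))) / 2"
    unfolding sum_eq by (simp add: algebra_simps)
  also have "\<dots> = cos p * (1 - (-1)^N) / 2 - (1 - (-1)^N * cos (2*real N*p)) / 2"
    unfolding cos_times_alternating_sum_cos_odd sum_neg_one_power by simp
  finally show ?thesis .
qed

lemma cos_times_alternating_sum_sin_sq_even_length:
  fixes p :: real
  shows "2 * cos p * (\<Sum>j<2*k. (-1)^j * (sin ((2*real j+1)*p/2))^2) = - ((sin (2*real k*p))^2)"
  using cos_times_alternating_sum_sin_sq_odd[of p "2*k"] cos_double_sin[of "2*real k*p"]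
  by (simp add: algebra_simps)

lemma cos_times_alternating_sum_sin_sq_odd_length:
  fixes p :: real
  shows "2 * cos p * (\<Sum>j<2*k+1. (-1)^j * (sin ((2*real j+1)*p/2))^2)
     = cos p - (cos ((2*real k+1)*p))^2"
  using cos_times_alternating_sum_sin_sq_odd[of p "2*k+1"] cos_double_cos[of "(2*real k+1)*p"]
  by (simp add: algebra_simps)

lemma cos_pi_divide_gt_zero:
  fixes x :: real
  assumes "x > 2"
  shows "cos (pi / x) > 0"
proof (rule cos_gt_zero_pi)
  show "- (pi / 2) < pi / x"
    using assms by (smt (verit) divide_pos_pos pi_gt_zero)
  show "pi / x < pi / 2"
    using assms pi_gt_zero by (simp add: divide_less_eq)
qed

lemma alternating_sum_sin_sq_4k_terms:
  fixes k :: nat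
  assumes "k \<ge> 1"
  shows "(\<Sum>j=0..2*k-1. (-1::real)^j * (sin ((2*real j+1)*pi/(8*real k+2)))^2)
           = - ((sin (2*real k*pi/(4*real k+1)))^2) / (2 * cos (pi/(4*real k+1)))"
proof -
  define p where "p = pi/(4*real k+1)"
  have range: "{0..2*k-1} = {..<2*k}"
    using assms by auto
  have angle: "(2*real j+1)*pi/(8*real k+2) = (2*real j+1)*p/2" for j
    unfolding p_def by (simp add: field_simps)
  have last_angle: "2*real k*pi/(4*real k+1) = 2*real k*p"
    unfolding p_def by simp
  have "cos p > 0"
    unfolding p_def by (intro cos_pi_divide_gt_zero) (use assms in simp)
  then show ?thesis
    using cos_times_alternating_sum_sin_sq_even_length[of p k]
    unfolding range angle last_angle p_def[symmetric] by (simp add: field_simps mult.assoc)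
qed

lemma alternating_sum_sin_sq_4k_plus_2_terms:
  fixes k :: nat
  shows "(\<Sum>j=0..2*k. (-1::real)^j * (sin ((2*real j+1)*pi/(8*real k+6)))^2)
           = 1/2 - (cos ((2*real k+1)*pi/(4*real k+3)))^2 / (2 * cos (pi/(4*real k+3)))"
proof -
  define p where "p = pi/(4*real k+3)"
  have range: "{0..2*k} = {..<2*k+1}"
    by auto
  have angle: "(2*real j+1)*pi/(8*real k+6) = (2*real j+1)*p/2" for j
    unfolding p_def by (simp add: field_simps)
  have last_angle: "(2*real k+1)*pi/(4*real k+3) = (2*real k+1)*p"
    unfolding p_def by simp
  have "cos p > 0"
    unfolding p_def by (intro cos_pi_divide_gt_zero) simp
  then show ?thesis
    using cos_times_alternating_sum_sin_sq_odd_length[of p k]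
    unfolding range angle last_angle p_def[symmetric] by (simp add: field_simps)
qed

theorem proposition4:
  shows "(\<forall>k::nat. k \<ge> 1 \<longrightarrow>
            (\<Sum>j=0..2*k-1. (-1::real)^j * (sin ((2*real j+1)*pi/(8*real k+2)))^2)
              = - ((sin (2*real k*pi/(4*real k+1)))^2) / (2 * cos (pi/(4*real k+1))))
       \<and> (\<forall>k::nat. k \<ge> 1 \<longrightarrow>
            (\<Sum>j=0..2*k. (-1::real)^j * (sin ((2*real j+1)*pi/(8*real k+6)))^2)
              = 1/2 - (cos ((2*real k+1)*pi/(4*real k+3)))^2 / (2 * cos (pi/(4*real k+3))))
       \<and> ((\<lambda>k::nat. \<Sum>j=0..2*k-1. (-1::real)^j * (sin ((2*real j+1)*pi/(8*real k+2)))^2)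
            \<longlonglongrightarrow> - (1/2))
       \<and> ((\<lambda>k::nat. \<Sum>j=0..2*k. (-1::real)^j * (sin ((2*real j+1)*pi/(8*real k+6)))^2)
            \<longlonglongrightarrow> 1/2)"
proof (intro conjI)
  have "(\<lambda>k::nat. - ((sin (2*real k*pi/(4*real k+1)))^2) / (2 * cos (pi/(4*real k+1))))
          \<longlonglongrightarrow> - (1/2)"
    by real_asymp
  then show "(\<lambda>k::nat. \<Sum>j=0..2*k-1. (-1::real)^j * (sin ((2*real j+1)*pi/(8*real k+2)))^2)
               \<longlonglongrightarrow> - (1/2)"
    by (rule Lim_transform_eventually)
      (rule eventually_mono[OF eventually_ge_at_top[of 1]],
        rule alternating_sum_sin_sq_4k_terms[symmetric])
  have "(\<lambda>k::nat. 1/2 - (cos ((2*real k+1)*pi/(4*real k+3)))^2 / (2 * cos (pi/(4*real k+3))))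
          \<longlonglongrightarrow> 1/2"
    by real_asymp
  then show "(\<lambda>k::nat. \<Sum>j=0..2*k. (-1::real)^j * (sin ((2*real j+1)*pi/(8*real k+6)))^2)
               \<longlonglongrightarrow> 1/2"
    by (simp only: alternating_sum_sin_sq_4k_plus_2_terms)
qed (use alternating_sum_sin_sq_4k_terms alternating_sum_sin_sq_4k_plus_2_terms in auto)

end
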